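(* Let $X_1,X_2$ be locally compact Hausdorff spaces, $\mathcal{A}_i\subset\mathcal{C}_c(X_i)$ subalgebras and $N_i$ uniform norms on $\mathcal{A}_i$. For all Borel probability measures $\eta_1,m_1$ on $X_1$ and $\eta_2,m_2$ on $X_2$, \[ \mathrm{dist}_{N_1\otimes N_2}(\eta_1\otimes\eta_2,m_1\otimes m_2)\ll\max(\mathrm{dist}_{N_1}(\eta_1,m_1),\mathrm{dist}_{N_2}(\eta_2,m_2)), \] where the implied constant depends only on $N_1$ and $N_2$.
   Context: A norm $N$ on $\mathcal{A}\subset\mathcal{C}_c(X)$ is uniform if $\|\phi\|_\infty\le F\,N(\phi)$ for some $F$ and all $\phi$. $\mathrm{dist}_N(\mu,\nu)=\sup\{|\mu(\phi)-\nu(\phi)|:\phi\in\mathcal{A},N(\phi)\le1\}$. $N_1\otimes N_2$ is the projective tensor norm on the algebraic tensor product $\mathcal{A}_1\otimes\mathcal{A}_2\subset\mathcal{C}_c(X_1\times X_2)$: $(N_1\otimes N_2)(\phi)=\inf\sum_iN_1(\phi_{1i})N_2(\phi_{2i})$ over representations $\phi=\sum_i\phi_{1i}\otimes\phi_{2i}$. *)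

theory Defs
  imports "HOL-Analysis.Analysis" "HOL-Probability.Probability"
begin

definition Cc :: "('a::topological_space \<Rightarrow> real) set" where
  "Cc = {f. continuous_on UNIV f \<and> compact (closure {x. f x \<noteq> 0})}"

definition subalgebra_Cc :: "('a::topological_space \<Rightarrow> real) set \<Rightarrow> bool" where
  "subalgebra_Cc A \<longleftrightarrow> A \<subseteq> Cc \<and> (\<lambda>x. 0) \<in> A \<and>
     (\<forall>f\<in>A. \<forall>g\<in>A. (\<lambda>x. f x + g x) \<in> A \<and> (\<lambda>x. f x * g x) \<in> A) \<and>
     (\<forall>c::real. \<forall>f\<in>A. (\<lambda>x. c * f x) \<in> A)"

definition is_norm_on :: "('a \<Rightarrow> real) set \<Rightarrow> (('a \<Rightarrow> real) \<Rightarrow> real) \<Rightarrow> bool" where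
  "is_norm_on A N \<longleftrightarrow>
     (\<forall>f\<in>A. N f \<ge> 0) \<and> (\<forall>f\<in>A. N f = 0 \<longleftrightarrow> f = (\<lambda>x. 0)) \<and>
     (\<forall>c::real. \<forall>f\<in>A. N (\<lambda>x. c * f x) = \<bar>c\<bar> * N f) \<and>
     (\<forall>f\<in>A. \<forall>g\<in>A. N (\<lambda>x. f x + g x) \<le> N f + N g)"

definition uniform_norm :: "('a \<Rightarrow> real) set \<Rightarrow> (('a \<Rightarrow> real) \<Rightarrow> real) \<Rightarrow> bool" where
  "uniform_norm A N \<longleftrightarrow> is_norm_on A N \<and>
     (\<exists>F. \<forall>f\<in>A. \<forall>x. \<bar>f x\<bar> \<le> F * N f)"

definition dist_N :: "('a \<Rightarrow> real) set \<Rightarrow> (('a \<Rightarrow> real) \<Rightarrow> real) \<Rightarrow> 'a measure \<Rightarrow> 'a measure \<Rightarrow> real" where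
  "dist_N A N \<mu> \<nu> = Sup {\<bar>(\<integral>x. \<phi> x \<partial>\<mu>) - (\<integral>x. \<phi> x \<partial>\<nu>)\<bar> | \<phi>. \<phi> \<in> A \<and> N \<phi> \<le> 1}"

text \<open>A representation of a function on X1 x X2 as a finite sum of elementary tensors,
  given as a list of pairs (phi_1i, phi_2i).\<close>
definition tensor_fun :: "(('a \<Rightarrow> real) \<times> ('b \<Rightarrow> real)) list \<Rightarrow> ('a \<times> 'b \<Rightarrow> real)" where
  "tensor_fun rs = (\<lambda>(x, y). (\<Sum>r\<leftarrow>rs. fst r x * snd r y))"

definition tensor_reps :: "('a \<Rightarrow> real) set \<Rightarrow> ('b \<Rightarrow> real) set \<Rightarrow> ('a \<times> 'b \<Rightarrow> real)
    \<Rightarrow> (('a \<Rightarrow> real) \<times> ('b \<Rightarrow> real)) list set" where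
  "tensor_reps A1 A2 \<phi> = {rs. set rs \<subseteq> A1 \<times> A2 \<and> tensor_fun rs = \<phi>}"

text \<open>Algebraic tensor product A1 \<otimes> A2, as a space of functions on X1 x X2.\<close>
definition tensor_space :: "('a \<Rightarrow> real) set \<Rightarrow> ('b \<Rightarrow> real) set \<Rightarrow> ('a \<times> 'b \<Rightarrow> real) set" where
  "tensor_space A1 A2 = {\<phi>. tensor_reps A1 A2 \<phi> \<noteq> {}}"

definition proj_tensor_norm :: "('a \<Rightarrow> real) set \<Rightarrow> ('b \<Rightarrow> real) set \<Rightarrow> (('a \<Rightarrow> real) \<Rightarrow> real)
    \<Rightarrow> (('b \<Rightarrow> real) \<Rightarrow> real) \<Rightarrow> ('a \<times> 'b \<Rightarrow> real) \<Rightarrow> real" where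
  "proj_tensor_norm A1 A2 N1 N2 \<phi> =
     Inf {(\<Sum>r\<leftarrow>rs. N1 (fst r) * N2 (snd r)) | rs. rs \<in> tensor_reps A1 A2 \<phi>}"

definition borel_prob :: "'a::topological_space measure \<Rightarrow> bool" where
  "borel_prob M \<longleftrightarrow> sets M = sets borel \<and> prob_space M"

end

theory Submission
  imports Defs
begin

text \<open>Expand \<open>\<phi> = \<Sum>\<^sub>i \<phi>\<^sub>1\<^sub>i \<otimes> \<phi>\<^sub>2\<^sub>i\<close> and integrate termwise. Each summand of
  \<open>(\<eta>\<^sub>1 \<otimes> \<eta>\<^sub>2)(\<phi>) - (m\<^sub>1 \<otimes> m\<^sub>2)(\<phi>)\<close> splits as
  \<open>(\<eta>\<^sub>1 - m\<^sub>1)(\<phi>\<^sub>1\<^sub>i) \<eta>\<^sub>2(\<phi>\<^sub>2\<^sub>i) + m\<^sub>1(\<phi>\<^sub>1\<^sub>i) (\<eta>\<^sub>2 - m\<^sub>2)(\<phi>\<^sub>2\<^sub>i)\<close>. The differences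
  are at most \<open>dist\<^sub>N\<^sub>k \<cdot> N\<^sub>k(\<phi>\<^sub>k\<^sub>i)\<close>, and integrals against probability measures are at most
  \<open>\<parallel>\<phi>\<^sub>k\<^sub>i\<parallel>\<^sub>\<infinity> \<le> F\<^sub>k N\<^sub>k(\<phi>\<^sub>k\<^sub>i)\<close>, so the summand is at most
  \<open>(F\<^sub>1 + F\<^sub>2) max(dist\<^sub>N\<^sub>1, dist\<^sub>N\<^sub>2) N\<^sub>1(\<phi>\<^sub>1\<^sub>i) N\<^sub>2(\<phi>\<^sub>2\<^sub>i)\<close>. Taking the infimum over
  representations and then the supremum over the unit ball of \<open>N\<^sub>1 \<otimes> N\<^sub>2\<close> gives the theorem with
  \<open>C = F\<^sub>1 + F\<^sub>2\<close>.\<close>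

lemma (in pair_sigma_finite) integrable_product:
  fixes f :: "'a \<Rightarrow> real" and g :: "'b \<Rightarrow> real"
  assumes f: "integrable M1 f" and g: "integrable M2 g"
  shows "integrable (M1 \<Otimes>\<^sub>M M2) (\<lambda>(x, y). f x * g y)"
proof (rule Fubini_integrable)
  show "(\<lambda>(x, y). f x * g y) \<in> borel_measurable (M1 \<Otimes>\<^sub>M M2)"
    using f g by measurable
  show "integrable M1 (\<lambda>x. \<integral>y. norm ((\<lambda>(x, y). f x * g y) (x, y)) \<partial>M2)"
    using f g by (simp add: abs_mult)
  show "AE x in M1. integrable M2 (\<lambda>y. (\<lambda>(x, y). f x * g y) (x, y))"
    using g by simp
qed

lemma (in pair_sigma_finite) integral_product:
  fixes f :: "'a \<Rightarrow> real" and g :: "'b \<Rightarrow> real"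
  assumes "integrable M1 f" "integrable M2 g"
  shows "(\<integral>p. (\<lambda>(x, y). f x * g y) p \<partial>(M1 \<Otimes>\<^sub>M M2)) = integral\<^sup>L M1 f * integral\<^sup>L M2 g"
  using integral_fst[OF integrable_product[OF assms]] by simp

lemma tensor_fun_Nil: "tensor_fun [] = (\<lambda>p. 0)"
  by (auto simp: tensor_fun_def)

lemma Nil_tensor_reps_zero: "[] \<in> tensor_reps A1 A2 (\<lambda>p. 0)"
  by (simp add: tensor_reps_def tensor_fun_Nil)

lemma tensor_fun_Cons:
  "tensor_fun (r # rs) = (\<lambda>p. (\<lambda>(x, y). fst r x * snd r y) p + tensor_fun rs p)"
  by (auto simp: tensor_fun_def)

lemma (in pair_sigma_finite) integral_tensor_fun:
  fixes rs :: "(('a \<Rightarrow> real) \<times> ('b \<Rightarrow> real)) list"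
  assumes "\<And>f g. (f, g) \<in> set rs \<Longrightarrow> integrable M1 f \<and> integrable M2 g"
  shows "(\<integral>p. tensor_fun rs p \<partial>(M1 \<Otimes>\<^sub>M M2))
    = (\<Sum>r\<leftarrow>rs. integral\<^sup>L M1 (fst r) * integral\<^sup>L M2 (snd r))"
proof -
  have "integrable (M1 \<Otimes>\<^sub>M M2) (tensor_fun rs) \<and> (\<integral>p. tensor_fun rs p \<partial>(M1 \<Otimes>\<^sub>M M2))
      = (\<Sum>r\<leftarrow>rs. integral\<^sup>L M1 (fst r) * integral\<^sup>L M2 (snd r))"
    using assms
  proof (induction rs)
    case Nil
    then show ?case by (simp add: tensor_fun_Nil)
  next
    case (Cons r rs)
    obtain f g where r: "r = (f, g)" by (cases r)
    have "integrable (M1 \<Otimes>\<^sub>M M2) (\<lambda>(x, y). f x * g y)"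
      "(\<integral>p. (\<lambda>(x, y). f x * g y) p \<partial>(M1 \<Otimes>\<^sub>M M2)) = integral\<^sup>L M1 f * integral\<^sup>L M2 g"
      using Cons.prems r by (auto intro!: integrable_product integral_product)
    moreover have "integrable (M1 \<Otimes>\<^sub>M M2) (tensor_fun rs) \<and> (\<integral>p. tensor_fun rs p \<partial>(M1 \<Otimes>\<^sub>M M2))
      = (\<Sum>r\<leftarrow>rs. integral\<^sup>L M1 (fst r) * integral\<^sup>L M2 (snd r))"
      using Cons.prems by (intro Cons.IH) auto
    ultimately show ?case
      by (simp add: tensor_fun_Cons r Bochner_Integration.integral_add)
  qed
  then show ?thesis ..
qed

lemma bounded_range_Cc:
  assumes "f \<in> Cc"
  shows "bounded (range f)"
proof -
  let ?K = "closure {x. f x \<noteq> 0}"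
  have "compact (f ` ?K)"
    using assms by (auto simp: Cc_def intro: compact_continuous_image continuous_on_subset)
  moreover have "range f \<subseteq> insert 0 (f ` ?K)"
    using closure_subset by fastforce
  ultimately show ?thesis
    by (metis bounded_insert bounded_subset compact_imp_bounded)
qed

lemma integrable_Cc:
  assumes "finite_measure M" "sets M = sets borel" "f \<in> Cc"
  shows "integrable M f"
proof -
  interpret finite_measure M by fact
  obtain B where "\<And>x. \<bar>f x\<bar> \<le> B"
    using bounded_range_Cc[OF assms(3)] by (auto simp: bounded_real)
  moreover have "f \<in> borel_measurable M"
    using assms(3) measurable_cong_sets[OF assms(2) refl]
    by (auto simp: Cc_def intro: borel_measurable_continuous_onI)
  ultimately show ?thesis
    by (intro integrable_const_bound[where B = B]) auto
qed

lemma (in prob_space) abs_integral_le_const: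
  fixes f :: "'a \<Rightarrow> real"
  assumes "\<And>x. \<bar>f x\<bar> \<le> B"
  shows "\<bar>integral\<^sup>L M f\<bar> \<le> B"
proof (cases "integrable M f")
  case True
  have "\<bar>integral\<^sup>L M f\<bar> \<le> (\<integral>x. \<bar>f x\<bar> \<partial>M)" by (rule integral_abs_bound)
  also have "\<dots> \<le> B" using True assms by (intro integral_le_const) auto
  finally show ?thesis .
next
  case False
  then show ?thesis using assms[of undefined] by (simp add: not_integrable_integral_eq)
qed

lemma uniform_norm_nonneg_bound:
  assumes "uniform_norm A N"
  obtains F where "F \<ge> 0" "\<And>f x. f \<in> A \<Longrightarrow> \<bar>f x\<bar> \<le> F * N f"
proof -
  obtain F where F: "\<forall>f\<in>A. \<forall>x. \<bar>f x\<bar> \<le> F * N f"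
    using assms by (auto simp: uniform_norm_def)
  have "\<bar>f x\<bar> \<le> max F 0 * N f" if "f \<in> A" for f x
  proof -
    have "N f \<ge> 0" using assms that by (simp add: uniform_norm_def is_norm_on_def)
    then show ?thesis using F that by (meson max.cobounded1 mult_right_mono order_trans)
  qed
  then show ?thesis using that[of "max F 0"] by simp
qed

lemma dist_N_upper:
  assumes "uniform_norm A N" "prob_space \<mu>" "prob_space \<nu>" "\<phi> \<in> A" "N \<phi> \<le> 1"
  shows "\<bar>(\<integral>x. \<phi> x \<partial>\<mu>) - (\<integral>x. \<phi> x \<partial>\<nu>)\<bar> \<le> dist_N A N \<mu> \<nu>"
proof -
  obtain F where F: "F \<ge> 0" "\<And>f x. f \<in> A \<Longrightarrow> \<bar>f x\<bar> \<le> F * N f"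
    using uniform_norm_nonneg_bound[OF assms(1)] by blast
  have "bdd_above {\<bar>(\<integral>x. \<psi> x \<partial>\<mu>) - (\<integral>x. \<psi> x \<partial>\<nu>)\<bar> | \<psi>. \<psi> \<in> A \<and> N \<psi> \<le> 1}"
  proof (rule bdd_aboveI[where M = "2 * F"], clarify)
    fix \<psi> assume \<psi>: "\<psi> \<in> A" "N \<psi> \<le> 1"
    have "\<bar>\<psi> x\<bar> \<le> F" for x
      using F(2)[OF \<psi>(1), of x] mult_left_mono[OF \<psi>(2) F(1)] by simp
    then have "\<bar>\<integral>x. \<psi> x \<partial>\<mu>\<bar> \<le> F" "\<bar>\<integral>x. \<psi> x \<partial>\<nu>\<bar> \<le> F"
      using prob_space.abs_integral_le_const[OF assms(2)] prob_space.abs_integral_le_const[OF assms(3)]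
      by auto
    then show "\<bar>(\<integral>x. \<psi> x \<partial>\<mu>) - (\<integral>x. \<psi> x \<partial>\<nu>)\<bar> \<le> 2 * F" by linarith
  qed
  then show ?thesis
    unfolding dist_N_def using assms(4,5) by (intro cSup_upper) auto
qed

lemma dist_N_nonneg:
  assumes "uniform_norm A N" "(\<lambda>x. 0) \<in> A" "prob_space \<mu>" "prob_space \<nu>"
  shows "dist_N A N \<mu> \<nu> \<ge> 0"
proof -
  have "N (\<lambda>x. 0) = 0"
    using assms(1,2) unfolding uniform_norm_def is_norm_on_def by blast
  then show ?thesis using dist_N_upper[OF assms(1,3,4,2)] by simp
qed

lemma dist_N_bound:
  assumes "uniform_norm A N" "\<And>c f. f \<in> A \<Longrightarrow> (\<lambda>x. c * f x) \<in> A"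
    and "prob_space \<mu>" "prob_space \<nu>" "f \<in> A"
  shows "\<bar>(\<integral>x. f x \<partial>\<mu>) - (\<integral>x. f x \<partial>\<nu>)\<bar> \<le> dist_N A N \<mu> \<nu> * N f"
proof (cases "N f = 0")
  case True
  then have "f = (\<lambda>x. 0)"
    using assms(1,5) unfolding uniform_norm_def is_norm_on_def by blast
  then show ?thesis using True by simp
next
  case False
  then have Nf: "N f > 0"
    using assms(1,5) by (auto simp: uniform_norm_def is_norm_on_def order_le_less)
  define c where "c = 1 / N f"
  have "N (\<lambda>x. c * f x) = \<bar>c\<bar> * N f"
    using assms(1,5) unfolding uniform_norm_def is_norm_on_def by blast
  then have "N (\<lambda>x. c * f x) = 1"
    using Nf by (simp add: c_def)
  then have "\<bar>(\<integral>x. c * f x \<partial>\<mu>) - (\<integral>x. c * f x \<partial>\<nu>)\<bar> \<le> dist_N A N \<mu> \<nu>"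
    using dist_N_upper[OF assms(1,3,4) assms(2)[OF assms(5)]] by simp
  then have "\<bar>(\<integral>x. f x \<partial>\<mu>) - (\<integral>x. f x \<partial>\<nu>)\<bar> / N f \<le> dist_N A N \<mu> \<nu>"
    using Nf by (simp add: c_def diff_divide_distrib[symmetric])
  then show ?thesis using Nf by (simp add: divide_le_eq)
qed

lemma dist_N_le:
  fixes K :: real
  assumes "\<phi>\<^sub>0 \<in> A" "N \<phi>\<^sub>0 \<le> 1" "K \<ge> 0"
    and "\<And>\<phi>. \<phi> \<in> A \<Longrightarrow> \<bar>(\<integral>x. \<phi> x \<partial>\<mu>) - (\<integral>x. \<phi> x \<partial>\<nu>)\<bar> \<le> K * N \<phi>"
  shows "dist_N A N \<mu> \<nu> \<le> K"
  unfolding dist_N_def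
proof (rule cSup_least)
  show "{\<bar>(\<integral>x. \<phi> x \<partial>\<mu>) - (\<integral>x. \<phi> x \<partial>\<nu>)\<bar> | \<phi>. \<phi> \<in> A \<and> N \<phi> \<le> 1} \<noteq> {}"
    using assms(1,2) by blast
  fix y assume "y \<in> {\<bar>(\<integral>x. \<phi> x \<partial>\<mu>) - (\<integral>x. \<phi> x \<partial>\<nu>)\<bar> | \<phi>. \<phi> \<in> A \<and> N \<phi> \<le> 1}"
  then obtain \<phi> where "\<phi> \<in> A" "N \<phi> \<le> 1" "y = \<bar>(\<integral>x. \<phi> x \<partial>\<mu>) - (\<integral>x. \<phi> x \<partial>\<nu>)\<bar>"
    by blast
  then show "y \<le> K"
    using assms(4)[of \<phi>] mult_left_mono[of "N \<phi>" 1 K] assms(3) by simp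
qed

lemma le_mult_cInf:
  fixes d K :: real
  assumes "S \<noteq> {}" "K \<ge> 0" "\<And>t. t \<in> S \<Longrightarrow> d \<le> K * t"
  shows "d \<le> K * Inf S"
proof (cases "K = 0")
  case True
  then show ?thesis using assms(1,3) by fastforce
next
  case False
  then have "d / K \<le> Inf S"
    using assms by (intro cInf_greatest) (auto simp: divide_le_eq mult.commute)
  then show ?thesis using assms(2) False by (simp add: divide_le_eq mult.commute)
qed

lemma proj_tensor_norm_zero:
  assumes "is_norm_on A1 N1" "is_norm_on A2 N2"
  shows "proj_tensor_norm A1 A2 N1 N2 (\<lambda>p. 0) = 0"
  unfolding proj_tensor_norm_def
proof (rule cInf_eq_minimum)
  have "0 = (\<Sum>r\<leftarrow>[]. N1 (fst r) * N2 (snd r))" by simp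
  then show "0 \<in> {\<Sum>r\<leftarrow>rs. N1 (fst r) * N2 (snd r) |rs. rs \<in> tensor_reps A1 A2 (\<lambda>p. 0)}"
    using Nil_tensor_reps_zero by blast
  fix t assume "t \<in> {\<Sum>r\<leftarrow>rs. N1 (fst r) * N2 (snd r) |rs. rs \<in> tensor_reps A1 A2 (\<lambda>p. 0)}"
  then obtain rs where rs: "set rs \<subseteq> A1 \<times> A2" "t = (\<Sum>r\<leftarrow>rs. N1 (fst r) * N2 (snd r))"
    by (auto simp: tensor_reps_def)
  have "0 \<le> N1 (fst r) * N2 (snd r)" if "r \<in> set rs" for r
  proof -
    have "fst r \<in> A1" "snd r \<in> A2" using rs(1) that by auto
    then have "0 \<le> N1 (fst r)" "0 \<le> N2 (snd r)"
      using assms unfolding is_norm_on_def by blast+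
    then show ?thesis by simp
  qed
  then show "0 \<le> t"
    unfolding rs(2) by (intro sum_list_nonneg) auto
qed

lemma abs_mult_diff_le:
  fixes a b c d :: "'a::linordered_idom"
  shows "\<bar>a * b - c * d\<bar> \<le> \<bar>a - c\<bar> * \<bar>b\<bar> + \<bar>c\<bar> * \<bar>b - d\<bar>"
proof -
  have "a * b - c * d = (a - c) * b + c * (b - d)" by (simp add: algebra_simps)
  then show ?thesis by (metis abs_mult abs_triangle_ineq)
qed

context
  fixes A1 :: "('a::topological_space \<Rightarrow> real) set" and A2 :: "('b::topological_space \<Rightarrow> real) set"
    and N1 :: "('a \<Rightarrow> real) \<Rightarrow> real" and N2 :: "('b \<Rightarrow> real) \<Rightarrow> real"
    and F1 F2 :: real and \<eta>1 m1 :: "'a measure" and \<eta>2 m2 :: "'b measure"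
  assumes sub1: "subalgebra_Cc A1" and sub2: "subalgebra_Cc A2"
    and un1: "uniform_norm A1 N1" and un2: "uniform_norm A2 N2"
    and F1: "F1 \<ge> 0" "\<And>f x. f \<in> A1 \<Longrightarrow> \<bar>f x\<bar> \<le> F1 * N1 f"
    and F2: "F2 \<ge> 0" "\<And>g y. g \<in> A2 \<Longrightarrow> \<bar>g y\<bar> \<le> F2 * N2 g"
    and probs: "borel_prob \<eta>1" "borel_prob m1" "borel_prob \<eta>2" "borel_prob m2"
begin

private lemma prob_spaces: "prob_space \<eta>1" "prob_space m1" "prob_space \<eta>2" "prob_space m2"
  using probs by (auto simp: borel_prob_def)

private lemma max_dist_N_nonneg: "max (dist_N A1 N1 \<eta>1 m1) (dist_N A2 N2 \<eta>2 m2) \<ge> 0"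
  using sub1 un1 prob_spaces by (auto simp: subalgebra_Cc_def intro!: dist_N_nonneg max.coboundedI1)

lemma elementary_tensor_integral_diff_le:
  assumes f: "f \<in> A1" and g: "g \<in> A2"
  shows "\<bar>(\<integral>x. f x \<partial>\<eta>1) * (\<integral>y. g y \<partial>\<eta>2) - (\<integral>x. f x \<partial>m1) * (\<integral>y. g y \<partial>m2)\<bar>
    \<le> (F1 + F2) * max (dist_N A1 N1 \<eta>1 m1) (dist_N A2 N2 \<eta>2 m2) * (N1 f * N2 g)"
proof -
  let ?d = "max (dist_N A1 N1 \<eta>1 m1) (dist_N A2 N2 \<eta>2 m2)"
  have "N1 f \<ge> 0" "N2 g \<ge> 0"
    using un1 un2 f g by (auto simp: uniform_norm_def is_norm_on_def)
  moreover have "\<bar>(\<integral>x. f x \<partial>\<eta>1) - (\<integral>x. f x \<partial>m1)\<bar> \<le> dist_N A1 N1 \<eta>1 m1 * N1 f"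
    and "\<bar>(\<integral>y. g y \<partial>\<eta>2) - (\<integral>y. g y \<partial>m2)\<bar> \<le> dist_N A2 N2 \<eta>2 m2 * N2 g"
    using sub1 sub2 f g
    by (auto simp: subalgebra_Cc_def intro!: dist_N_bound un1 un2 prob_spaces)
  moreover have "\<bar>\<integral>y. g y \<partial>\<eta>2\<bar> \<le> F2 * N2 g" "\<bar>\<integral>x. f x \<partial>m1\<bar> \<le> F1 * N1 f"
    using prob_space.abs_integral_le_const[OF prob_spaces(3) F2(2)[OF g]]
      prob_space.abs_integral_le_const[OF prob_spaces(2) F1(2)[OF f]] by auto
  ultimately have "\<bar>(\<integral>x. f x \<partial>\<eta>1) - (\<integral>x. f x \<partial>m1)\<bar> * \<bar>\<integral>y. g y \<partial>\<eta>2\<bar>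
      + \<bar>\<integral>x. f x \<partial>m1\<bar> * \<bar>(\<integral>y. g y \<partial>\<eta>2) - (\<integral>y. g y \<partial>m2)\<bar>
      \<le> (?d * N1 f) * (F2 * N2 g) + (F1 * N1 f) * (?d * N2 g)"
    using max_dist_N_nonneg F1(1) F2(1)
    by (intro add_mono mult_mono; smt (verit) mult_right_mono)
  also have "\<dots> = (F1 + F2) * ?d * (N1 f * N2 g)" by (simp add: algebra_simps)
  finally show ?thesis using abs_mult_diff_le order_trans by blast
qed

lemma tensor_fun_integral_diff_le:
  assumes rs: "set rs \<subseteq> A1 \<times> A2"
  shows "\<bar>(\<integral>p. tensor_fun rs p \<partial>(\<eta>1 \<Otimes>\<^sub>M \<eta>2)) - (\<integral>p. tensor_fun rs p \<partial>(m1 \<Otimes>\<^sub>M m2))\<bar>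
    \<le> (F1 + F2) * max (dist_N A1 N1 \<eta>1 m1) (dist_N A2 N2 \<eta>2 m2) * (\<Sum>r\<leftarrow>rs. N1 (fst r) * N2 (snd r))"
proof -
  let ?K = "(F1 + F2) * max (dist_N A1 N1 \<eta>1 m1) (dist_N A2 N2 \<eta>2 m2)"
  interpret \<eta>: pair_prob_space \<eta>1 \<eta>2
    using prob_spaces by (simp add: pair_prob_space_def pair_sigma_finite_def prob_space_imp_sigma_finite)
  interpret m: pair_prob_space m1 m2
    using prob_spaces by (simp add: pair_prob_space_def pair_sigma_finite_def prob_space_imp_sigma_finite)
  have integrable: "integrable M f" if "f \<in> A" "subalgebra_Cc A" "borel_prob M" for A M
    and f :: "'c::topological_space \<Rightarrow> real"
    using that by (intro integrable_Cc) (auto simp: subalgebra_Cc_def borel_prob_def prob_space_def)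
  have "(\<integral>p. tensor_fun rs p \<partial>(\<eta>1 \<Otimes>\<^sub>M \<eta>2))
      = (\<Sum>r\<leftarrow>rs. (\<integral>x. fst r x \<partial>\<eta>1) * (\<integral>y. snd r y \<partial>\<eta>2))"
    using rs sub1 sub2 probs by (intro \<eta>.integral_tensor_fun) (auto intro: integrable)
  moreover have "(\<integral>p. tensor_fun rs p \<partial>(m1 \<Otimes>\<^sub>M m2))
      = (\<Sum>r\<leftarrow>rs. (\<integral>x. fst r x \<partial>m1) * (\<integral>y. snd r y \<partial>m2))"
    using rs sub1 sub2 probs by (intro m.integral_tensor_fun) (auto intro: integrable)
  ultimately have "(\<integral>p. tensor_fun rs p \<partial>(\<eta>1 \<Otimes>\<^sub>M \<eta>2)) - (\<integral>p. tensor_fun rs p \<partial>(m1 \<Otimes>\<^sub>M m2))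
      = (\<Sum>r\<leftarrow>rs. (\<integral>x. fst r x \<partial>\<eta>1) * (\<integral>y. snd r y \<partial>\<eta>2) - (\<integral>x. fst r x \<partial>m1) * (\<integral>y. snd r y \<partial>m2))"
    by (simp add: sum_list_subtractf)
  also have "\<bar>\<dots>\<bar> \<le> (\<Sum>r\<leftarrow>rs. ?K * (N1 (fst r) * N2 (snd r)))"
    using rs elementary_tensor_integral_diff_le
    by (intro order_trans[OF sum_list_abs]) (auto simp: o_def intro!: sum_list_mono)
  also have "\<dots> = ?K * (\<Sum>r\<leftarrow>rs. N1 (fst r) * N2 (snd r))"
    by (rule sum_list_const_mult)
  finally show ?thesis .
qed

lemma tensor_space_integral_diff_le:
  assumes "\<phi> \<in> tensor_space A1 A2"
  shows "\<bar>(\<integral>p. \<phi> p \<partial>(\<eta>1 \<Otimes>\<^sub>M \<eta>2)) - (\<integral>p. \<phi> p \<partial>(m1 \<Otimes>\<^sub>M m2))\<bar>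
    \<le> (F1 + F2) * max (dist_N A1 N1 \<eta>1 m1) (dist_N A2 N2 \<eta>2 m2) * proj_tensor_norm A1 A2 N1 N2 \<phi>"
  unfolding proj_tensor_norm_def
proof (rule le_mult_cInf)
  show "{\<Sum>r\<leftarrow>rs. N1 (fst r) * N2 (snd r) |rs. rs \<in> tensor_reps A1 A2 \<phi>} \<noteq> {}"
    using assms by (auto simp: tensor_space_def)
  show "(F1 + F2) * max (dist_N A1 N1 \<eta>1 m1) (dist_N A2 N2 \<eta>2 m2) \<ge> 0"
    using F1(1) F2(1) max_dist_N_nonneg by simp
  fix t assume "t \<in> {\<Sum>r\<leftarrow>rs. N1 (fst r) * N2 (snd r) |rs. rs \<in> tensor_reps A1 A2 \<phi>}"
  then show "\<bar>(\<integral>p. \<phi> p \<partial>(\<eta>1 \<Otimes>\<^sub>M \<eta>2)) - (\<integral>p. \<phi> p \<partial>(m1 \<Otimes>\<^sub>M m2))\<bar>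
    \<le> (F1 + F2) * max (dist_N A1 N1 \<eta>1 m1) (dist_N A2 N2 \<eta>2 m2) * t"
    using tensor_fun_integral_diff_le by (auto simp: tensor_reps_def)
qed

end

theorem lemma7p9:
  fixes A1 :: "('a::t2_space \<Rightarrow> real) set" and A2 :: "('b::t2_space \<Rightarrow> real) set"
    and N1 :: "('a \<Rightarrow> real) \<Rightarrow> real" and N2 :: "('b \<Rightarrow> real) \<Rightarrow> real"
  assumes "locally_compact_space (euclidean :: 'a topology)"
    and "locally_compact_space (euclidean :: 'b topology)"
    and "subalgebra_Cc A1" and "subalgebra_Cc A2"
    and "uniform_norm A1 N1" and "uniform_norm A2 N2"
  shows "\<exists>C. \<forall>\<eta>1 m1 \<eta>2 m2. borel_prob \<eta>1 \<longrightarrow> borel_prob m1 \<longrightarrow> borel_prob \<eta>2 \<longrightarrow> borel_prob m2 \<longrightarrow>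
     dist_N (tensor_space A1 A2) (proj_tensor_norm A1 A2 N1 N2) (\<eta>1 \<Otimes>\<^sub>M \<eta>2) (m1 \<Otimes>\<^sub>M m2)
       \<le> C * max (dist_N A1 N1 \<eta>1 m1) (dist_N A2 N2 \<eta>2 m2)"
proof -
  obtain F1 where F1: "F1 \<ge> 0" "\<And>f x. f \<in> A1 \<Longrightarrow> \<bar>f x\<bar> \<le> F1 * N1 f"
    using uniform_norm_nonneg_bound[OF assms(5)] by blast
  obtain F2 where F2: "F2 \<ge> 0" "\<And>g y. g \<in> A2 \<Longrightarrow> \<bar>g y\<bar> \<le> F2 * N2 g"
    using uniform_norm_nonneg_bound[OF assms(6)] by blast
  have "dist_N (tensor_space A1 A2) (proj_tensor_norm A1 A2 N1 N2) (\<eta>1 \<Otimes>\<^sub>M \<eta>2) (m1 \<Otimes>\<^sub>M m2)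
      \<le> (F1 + F2) * max (dist_N A1 N1 \<eta>1 m1) (dist_N A2 N2 \<eta>2 m2)"
    if probs: "borel_prob \<eta>1" "borel_prob m1" "borel_prob \<eta>2" "borel_prob m2"
    for \<eta>1 m1 :: "'a measure" and \<eta>2 m2 :: "'b measure"
  proof (rule dist_N_le[where \<phi>\<^sub>0 = "\<lambda>p. 0"])
    show "(\<lambda>p. 0) \<in> tensor_space A1 A2"
      using Nil_tensor_reps_zero by (auto simp: tensor_space_def)
    show "proj_tensor_norm A1 A2 N1 N2 (\<lambda>p. 0) \<le> 1"
      using assms(5,6) by (simp add: uniform_norm_def proj_tensor_norm_zero)
    have "dist_N A1 N1 \<eta>1 m1 \<ge> 0"
      using assms(3,5) probs by (intro dist_N_nonneg) (auto simp: subalgebra_Cc_def borel_prob_def)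
    then show "(F1 + F2) * max (dist_N A1 N1 \<eta>1 m1) (dist_N A2 N2 \<eta>2 m2) \<ge> 0"
      using F1(1) F2(1) by simp
  qed (rule tensor_space_integral_diff_le[OF assms(3-6) F1 F2 probs])
  then show ?thesis by blast
qed

end
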